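(* The kernel of the Hopf algebra homomorphism $\varphi:\mathrm{WCQSym}\to\mathrm{QSym}$, defined by $\varphi(M_\alpha)=(-1)^{\ell_\varepsilon(\alpha)}M_{\bar\alpha}$ if $\alpha\in\mathcal C_N$ and $\varphi(M_\alpha)=0$ if $\alpha\in\mathcal C_\varepsilon$, is the ideal of $\mathrm{WCQSym}$ generated by the set $B_\varepsilon=\{M_\alpha:\alpha\in\mathcal C_\varepsilon\}$.
   Context: $\tilde{\mathbb N}=\mathbb N\cup\{\varepsilon\}$ with $0+\varepsilon=\varepsilon+\varepsilon=\varepsilon$ and $n+\varepsilon=n$ for integers $n\ge1$. $\mathbf{k}$ is a commutative ring containing $\mathbb Q$; $\mathbf{k}[[X]]_{\tilde{\mathbb N}}$, $X=\{x_1<x_2<\cdots\}$, is the algebra of possibly infinite linear combinations of formal monomials $\prod x_i^{f(x_i)}$ with $f$ finitely supported $\tilde{\mathbb N}$-valued, multiplied by adding exponents in $\tilde{\mathbb N}$. An $\tilde{\mathbb N}$-composition is a finite (possibly empty) sequence of elements of $\{\varepsilon,1,2,\dots\}$; $M_{(\alpha_1,\dots,\alpha_k)}=\sum_{1\le i_1<\cdots<i_k}x_{i_1}^{\alpha_1}\cdots x_{i_k}^{\alpha_k}$, $M_\emptyset=1$. $\mathrm{WCQSym}$ is the $\mathbf k$-span of all $M_\alpha$ (a Hopf algebra with deconcatenation coproduct $\Delta(M_{(\alpha_1,\dots,\alpha_k)})=\sum_{i=0}^kM_{(\alpha_1,\dots,\alpha_i)}\otimes M_{(\alpha_{i+1},\dots,\alpha_k)}$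 and counit $\epsilon(M_\alpha)=\delta_{\alpha,\emptyset}$), and $\mathrm{QSym}$ the Hopf subalgebra spanned by the $M_\alpha$ with all entries positive integers. $\ell_\varepsilon(\alpha)$ is the number of entries equal to $\varepsilon$, $\bar\alpha$ is $\alpha$ with its $\varepsilon$ entries deleted. $\mathcal C_\varepsilon$ is the set of $\tilde{\mathbb N}$-compositions with first entry $\varepsilon$, $\mathcal C_N$ the set of all others (including the empty one). *)

theory Defs
  imports Main
begin

text \<open>The extended naturals Ntilde = N with an extra element eps.
  Nt 0 is the integer 0, Nt n the integer n, Eps is epsilon.\<close>
datatype ntil = Eps | Nt nat

fun tadd :: "ntil \<Rightarrow> ntil \<Rightarrow> ntil" where
  "tadd (Nt a) (Nt b) = Nt (a + b)"
| "tadd Eps Eps = Eps"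
| "tadd (Nt n) Eps = (if n = 0 then Eps else Nt n)"
| "tadd Eps (Nt n) = (if n = 0 then Eps else Nt n)"

text \<open>Formal monomials: exponent functions on the variables x_0 < x_1 < ... (indexed by nat)
  with finite support.  Power series: coefficient functions on exponent functions
  (coefficients off genuine monomials are kept 0 by all constructions below).\<close>
type_synonym 'k ser = "(nat \<Rightarrow> ntil) \<Rightarrow> 'k"

definition is_mono :: "(nat \<Rightarrow> ntil) \<Rightarrow> bool" where
  "is_mono f \<longleftrightarrow> finite {i. f i \<noteq> Nt 0}"

definition szero :: "'k::comm_ring_1 ser" where
  "szero = (\<lambda>h. 0)"

definition sadd :: "'k::comm_ring_1 ser \<Rightarrow> 'k ser \<Rightarrow> 'k ser" where
  "sadd A B = (\<lambda>h. A h + B h)"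

definition sscale :: "'k::comm_ring_1 \<Rightarrow> 'k ser \<Rightarrow> 'k ser" where
  "sscale c A = (\<lambda>h. c * A h)"

definition smult :: "'k::comm_ring_1 ser \<Rightarrow> 'k ser \<Rightarrow> 'k ser" where
  "smult A B = (\<lambda>h. if is_mono h then
      (\<Sum>p\<in>{(f, g). is_mono f \<and> is_mono g \<and> (\<forall>i. tadd (f i) (g i) = h i)}.
          A (fst p) * B (snd p))
    else 0)"

definition is_comp :: "ntil list \<Rightarrow> bool" where
  "is_comp \<alpha> \<longleftrightarrow> Nt 0 \<notin> set \<alpha>"

definition nzvals :: "(nat \<Rightarrow> ntil) \<Rightarrow> ntil list" where
  "nzvals f = map f (sorted_list_of_set {i. f i \<noteq> Nt 0})"

text \<open>Monomial quasisymmetric function M_alpha = sum over i_1<...<i_k of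
  x_{i_1}^{alpha_1} ... x_{i_k}^{alpha_k}; M_[] = 1.\<close>
definition Mser :: "ntil list \<Rightarrow> 'k::comm_ring_1 ser" where
  "Mser \<alpha> = (\<lambda>h. if is_mono h \<and> nzvals h = \<alpha> then 1 else 0)"

definition WCQSym :: "'k::comm_ring_1 ser set" where
  "WCQSym = {x. \<exists>S c. finite S \<and> (\<forall>\<alpha>\<in>S. is_comp \<alpha>) \<and>
                       x = (\<lambda>h. \<Sum>\<alpha>\<in>S. c \<alpha> * Mser \<alpha> h)}"

definition C_eps :: "ntil list set" where
  "C_eps = {\<alpha>. is_comp \<alpha> \<and> \<alpha> \<noteq> [] \<and> hd \<alpha> = Eps}"

definition C_N :: "ntil list set" where
  "C_N = {\<alpha>. is_comp \<alpha> \<and> (\<alpha> = [] \<or> hd \<alpha> \<noteq> Eps)}"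

definition ell_eps :: "ntil list \<Rightarrow> nat" where
  "ell_eps \<alpha> = length (filter (\<lambda>a. a = Eps) \<alpha>)"

definition bar :: "ntil list \<Rightarrow> ntil list" where
  "bar \<alpha> = filter (\<lambda>a. a \<noteq> Eps) \<alpha>"

definition gen_ideal :: "'k::comm_ring_1 ser set \<Rightarrow> 'k ser set \<Rightarrow> 'k ser set" where
  "gen_ideal A B = \<Inter> {I. I \<subseteq> A \<and> B \<subseteq> I \<and> szero \<in> I \<and>
      (\<forall>x\<in>I. \<forall>y\<in>I. sadd x y \<in> I) \<and> (\<forall>a\<in>A. \<forall>x\<in>I. smult a x \<in> I)}"

end

theory Submission
  imports Defs
begin

text \<open>
  Elements of WCQSym are encoded by their finitely supported coefficient functions on
  compositions; multiplication becomes the quasi-shuffle product, in which two first letters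
  may merge via \<open>tadd\<close>.  On coefficients, \<open>\<phi>\<close> deletes the \<open>\<epsilon>\<close>'s with sign
  \<open>(-1)\<^bsup>\<ell>\<^sub>\<epsilon>\<^esup>\<close> and kills compositions starting with \<open>\<epsilon>\<close>; a direct computation on
  quasi-shuffles shows that this is multiplicative, so the kernel is an ideal containing \<open>B\<^sub>\<epsilon>\<close>.
  Conversely, if \<open>\<alpha> = u \<epsilon> w\<close> with \<open>u\<close> free of \<open>\<epsilon>\<close>, then \<open>M\<^sub>u M\<^bsub>\<epsilon>w\<^esub>\<close> lies in the ideal
  and equals \<open>M\<^sub>\<alpha>\<close> plus terms with fewer \<open>\<epsilon>\<close>'s or an earlier first \<open>\<epsilon>\<close>.  By induction
  every element of WCQSym is congruent modulo the ideal to some \<open>q \<in> QSym\<close>, and if it lies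
  in the kernel then \<open>q = \<phi> q = 0\<close>.
\<close>

section \<open>Products of series via coefficients on compositions\<close>

lemma tadd_eq_zero_iff: "tadd p q = Nt 0 \<longleftrightarrow> p = Nt 0 \<and> q = Nt 0"
  by (cases p; cases q) auto

definition series_of :: "(ntil list \<Rightarrow> 'k::comm_ring_1) \<Rightarrow> 'k ser" where
  "series_of c = (\<lambda>h. if is_mono h then c (nzvals h) else 0)"

definition strip_zeros :: "ntil list \<Rightarrow> ntil list" where
  "strip_zeros xs = filter (\<lambda>x. x \<noteq> Nt 0) xs"

definition splittings :: "ntil list \<Rightarrow> (ntil \<times> ntil) list set" where
  "splittings g = {s. length s = length g \<and> (\<forall>i<length s. tadd (fst (s!i)) (snd (s!i)) = g!i)}"

definition coeff_mult ::
    "(ntil list \<Rightarrow> 'k::comm_ring_1) \<Rightarrow> (ntil list \<Rightarrow> 'k) \<Rightarrow> ntil list \<Rightarrow> 'k" where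
  "coeff_mult c d g =
     (\<Sum>s\<in>splittings g. c (strip_zeros (map fst s)) * d (strip_zeros (map snd s)))"

definition supp_list :: "(nat \<Rightarrow> ntil) \<Rightarrow> nat list" where
  "supp_list h = sorted_list_of_set {i. h i \<noteq> Nt 0}"

definition mono_splits :: "(nat \<Rightarrow> ntil) \<Rightarrow> ((nat \<Rightarrow> ntil) \<times> (nat \<Rightarrow> ntil)) set" where
  "mono_splits h = {(f, g). is_mono f \<and> is_mono g \<and> (\<forall>i. tadd (f i) (g i) = h i)}"

definition extend_list :: "nat list \<Rightarrow> ntil list \<Rightarrow> nat \<Rightarrow> ntil" where
  "extend_list L xs i = (case map_of (zip L xs) i of None \<Rightarrow> Nt 0 | Some v \<Rightarrow> v)"

lemma nzvals_eq_map_supp_list: "nzvals h = map h (supp_list h)"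
  by (simp add: nzvals_def supp_list_def)

lemma nzvals_eq_strip_zeros:
  assumes "finite S" "{i. f i \<noteq> Nt 0} \<subseteq> S"
  shows "nzvals f = strip_zeros (map f (sorted_list_of_set S))"
proof -
  have "finite {i. f i \<noteq> Nt 0}" using assms finite_subset by blast
  then have "sorted_list_of_set {i. f i \<noteq> Nt 0} = filter (\<lambda>i. f i \<noteq> Nt 0) (sorted_list_of_set S)"
    by (intro sorted_distinct_set_unique) (use assms in \<open>auto intro: sorted_wrt_filter\<close>)
  then show ?thesis by (simp add: nzvals_def strip_zeros_def filter_map comp_def)
qed

lemma mono_splits_supp:
  assumes "(f, g) \<in> mono_splits h"
  shows "{i. f i \<noteq> Nt 0} \<subseteq> {i. h i \<noteq> Nt 0}" and "{i. g i \<noteq> Nt 0} \<subseteq> {i. h i \<noteq> Nt 0}"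
  using assms by (auto simp: mono_splits_def) (metis tadd_eq_zero_iff)+

lemma eq_if_map_supp_eq:
  assumes "{i. f i \<noteq> Nt 0} \<subseteq> set L" "{i. f' i \<noteq> Nt 0} \<subseteq> set L" "map f L = map f' L"
  shows "f = f'"
proof
  fix i show "f i = f' i"
  proof (cases "i \<in> set L")
    case False
    then have "f i = Nt 0" "f' i = Nt 0" using assms(1,2) by blast+
    then show ?thesis by simp
  qed (use assms(3) in \<open>simp add: map_eq_conv\<close>)
qed

lemma extend_list_nth:
  "distinct L \<Longrightarrow> length xs = length L \<Longrightarrow> k < length L \<Longrightarrow> extend_list L xs (L!k) = xs!k"
  by (simp add: extend_list_def map_of_zip_nth)

lemma map_extend_list: "distinct L \<Longrightarrow> length xs = length L \<Longrightarrow> map (extend_list L xs) L = xs"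
  by (rule nth_equalityI) (simp_all add: extend_list_nth)

lemma extend_list_outside: "length xs = length L \<Longrightarrow> i \<notin> set L \<Longrightarrow> extend_list L xs i = Nt 0"
proof -
  assume "length xs = length L" "i \<notin> set L"
  then have "map_of (zip L xs) i = None" by (metis map_of_zip_is_None)
  then show ?thesis by (simp add: extend_list_def)
qed

lemma is_mono_extend_list: "length xs = length L \<Longrightarrow> is_mono (extend_list L xs)"
  unfolding is_mono_def
  by (rule finite_subset[of _ "set L"]) (use extend_list_outside in blast)+

lemma splitting_lift:
  assumes h: "is_mono h" and s: "s \<in> splittings (nzvals h)"
  obtains f g where "(f, g) \<in> mono_splits h" "zip (map f (supp_list h)) (map g (supp_list h)) = s"
proof -
  define L where "L = supp_list h"
  have L: "distinct L" "set L = {i. h i \<noteq> Nt 0}"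
    using h by (simp_all add: L_def supp_list_def is_mono_def)
  have len: "length s = length L"
    and sum: "\<And>k. k < length L \<Longrightarrow> tadd (fst (s!k)) (snd (s!k)) = h (L!k)"
    using s by (auto simp: splittings_def nzvals_eq_map_supp_list L_def)
  define f where "f = extend_list L (map fst s)"
  define g where "g = extend_list L (map snd s)"
  have "tadd (f i) (g i) = h i" for i
  proof (cases "i \<in> set L")
    case True
    then obtain k where "k < length L" "i = L!k" by (metis in_set_conv_nth)
    then show ?thesis using sum len L(1) by (simp add: f_def g_def extend_list_nth)
  next
    case False then show ?thesis using len L(2) by (simp add: f_def g_def extend_list_outside)
  qed
  then have "(f, g) \<in> mono_splits h"
    using len by (simp add: mono_splits_def f_def g_def is_mono_extend_list)
  moreover have "zip (map f L) (map g L) = s"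
    using len L(1) by (simp add: f_def g_def map_extend_list zip_map_fst_snd)
  ultimately show ?thesis using that unfolding L_def by blast
qed

text \<open>Pairs of monomials with product monomial \<open>h\<close> are determined by their exponents on the
  support of \<open>h\<close>, and these form exactly the splittings of the exponent sequence of \<open>h\<close>.\<close>
lemma bij_betw_mono_splits:
  assumes h: "is_mono h"
  defines "L \<equiv> supp_list h"
  shows "bij_betw (\<lambda>(f, g). zip (map f L) (map g L)) (mono_splits h) (splittings (nzvals h))"
proof (rule bij_betw_imageI)
  show "inj_on (\<lambda>(f, g). zip (map f L) (map g L)) (mono_splits h)"
  proof (rule inj_onI, clarify)
    fix f g f' g' assume fg: "(f, g) \<in> mono_splits h" and fg': "(f', g') \<in> mono_splits h"
      and "zip (map f L) (map g L) = zip (map f' L) (map g' L)"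
    then have "map f L = map f' L" "map g L = map g' L" by (simp_all add: zip_eq_conv)
    moreover have "set L = {i. h i \<noteq> Nt 0}" using h by (simp add: L_def supp_list_def is_mono_def)
    ultimately show "f = f' \<and> g = g'"
      using mono_splits_supp[OF fg] mono_splits_supp[OF fg'] eq_if_map_supp_eq by metis
  qed
  show "(\<lambda>(f, g). zip (map f L) (map g L)) ` mono_splits h = splittings (nzvals h)"
  proof
    show "(\<lambda>(f, g). zip (map f L) (map g L)) ` mono_splits h \<subseteq> splittings (nzvals h)"
      by (auto simp: mono_splits_def splittings_def nzvals_eq_map_supp_list L_def)
    show "splittings (nzvals h) \<subseteq> (\<lambda>(f, g). zip (map f L) (map g L)) ` mono_splits h"
    proof
      fix s assume "s \<in> splittings (nzvals h)"
      then obtain f g where "(f, g) \<in> mono_splits h" "zip (map f L) (map g L) = s"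
        unfolding L_def by (rule splitting_lift[OF h])
      then show "s \<in> (\<lambda>(f, g). zip (map f L) (map g L)) ` mono_splits h"
        by (auto intro: rev_image_eqI[of "(f, g)"])
    qed
  qed
qed

lemma smult_series_of: "smult (series_of c) (series_of d) = series_of (coeff_mult c d)"
proof
  fix h :: "nat \<Rightarrow> ntil"
  show "smult (series_of c) (series_of d) h = series_of (coeff_mult c d) h"
  proof (cases "is_mono h")
    case False then show ?thesis by (simp add: smult_def series_of_def)
  next
    case True
    define L where "L = supp_list h"
    have fin: "finite {i. h i \<noteq> Nt 0}" using True by (simp add: is_mono_def)
    have nzvals_split: "nzvals f = strip_zeros (map f L)" "nzvals g = strip_zeros (map g L)"
      if "(f, g) \<in> mono_splits h" for f g
      using nzvals_eq_strip_zeros[OF fin mono_splits_supp(1)[OF that]]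
        nzvals_eq_strip_zeros[OF fin mono_splits_supp(2)[OF that]]
      by (simp_all add: L_def supp_list_def)
    have "smult (series_of c) (series_of d) h =
        (\<Sum>(f, g)\<in>mono_splits h. c (strip_zeros (map f L)) * d (strip_zeros (map g L)))"
      using True unfolding smult_def mono_splits_def[symmetric]
      by (auto simp: series_of_def mono_splits_def nzvals_split intro!: sum.cong)
    also have "\<dots> = coeff_mult c d (nzvals h)"
      unfolding coeff_mult_def L_def
      by (subst sum.reindex_bij_betw[OF bij_betw_mono_splits[OF True], symmetric])
        (simp add: case_prod_unfold)
    finally show ?thesis using True by (simp add: series_of_def)
  qed
qed

section \<open>Quasi-shuffle products\<close>

fun nt_val :: "ntil \<Rightarrow> nat" where
  "nt_val Eps = 0" | "nt_val (Nt n) = n"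

lemma nt_val_tadd: "nt_val (tadd p q) = nt_val p + nt_val q"
  by (cases p; cases q) auto

definition tadd_splits :: "ntil \<Rightarrow> (ntil \<times> ntil) set" where
  "tadd_splits x = {p. tadd (fst p) (snd p) = x}"

lemma tadd_splits_subset:
  "tadd_splits x \<subseteq> insert Eps (Nt ` {..nt_val x}) \<times> insert Eps (Nt ` {..nt_val x})"
proof
  fix p assume "p \<in> tadd_splits x"
  then have "nt_val (fst p) \<le> nt_val x" "nt_val (snd p) \<le> nt_val x"
    using nt_val_tadd[of "fst p" "snd p"] by (auto simp: tadd_splits_def)
  then show "p \<in> insert Eps (Nt ` {..nt_val x}) \<times> insert Eps (Nt ` {..nt_val x})"
    by (cases p; cases "fst p"; cases "snd p") (auto simp: mem_Times_iff)
qed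

lemma finite_tadd_splits: "finite (tadd_splits x)"
  by (rule finite_subset[OF tadd_splits_subset]) auto

lemma tadd_splits_eq:
  assumes "x \<noteq> Nt 0"
  shows "tadd_splits x = insert (x, Nt 0) (insert (Nt 0, x)
           {p \<in> tadd_splits x. fst p \<noteq> Nt 0 \<and> snd p \<noteq> Nt 0})"
proof (rule set_eqI)
  fix p :: "ntil \<times> ntil"
  show "p \<in> tadd_splits x \<longleftrightarrow> p \<in> insert (x, Nt 0) (insert (Nt 0, x)
           {p \<in> tadd_splits x. fst p \<noteq> Nt 0 \<and> snd p \<noteq> Nt 0})"
    using assms by (cases p; cases "fst p"; cases "snd p"; cases x) (auto simp: tadd_splits_def)
qed

lemma splittings_Nil: "splittings [] = {[]}"
  by (auto simp: splittings_def)

lemma splittings_Cons: "splittings (x # g) = (\<lambda>(p, s). p # s) ` (tadd_splits x \<times> splittings g)"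
proof
  show "splittings (x # g) \<subseteq> (\<lambda>(p, s). p # s) ` (tadd_splits x \<times> splittings g)"
  proof
    fix s assume s: "s \<in> splittings (x # g)"
    then obtain p s' where ps: "s = p # s'" by (cases s) (auto simp: splittings_def)
    have "tadd (fst (s'!i)) (snd (s'!i)) = g!i" if "i < length s'" for i
      using s ps that by (auto simp: splittings_def dest!: spec[of _ "Suc i"])
    then have "s' \<in> splittings g" using s ps by (simp add: splittings_def)
    moreover have "p \<in> tadd_splits x" using s ps by (auto simp: splittings_def tadd_splits_def)
    ultimately show "s \<in> (\<lambda>(p, s). p # s) ` (tadd_splits x \<times> splittings g)" using ps by blast
  qed
qed (auto simp: splittings_def tadd_splits_def nth_Cons split: nat.split)

text \<open>\<open>coeff_shift c a\<close> is the coefficient function \<open>c\<close> after the leading exponent \<open>a\<close>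
  has been read off; an exponent \<open>Nt 0\<close> contributes no letter.\<close>
definition coeff_shift :: "(ntil list \<Rightarrow> 'k) \<Rightarrow> ntil \<Rightarrow> ntil list \<Rightarrow> 'k" where
  "coeff_shift c a w = c (if a = Nt 0 then w else a # w)"

lemma coeff_mult_Nil: "coeff_mult c d [] = c [] * d []"
  by (simp add: coeff_mult_def splittings_Nil strip_zeros_def)

lemma coeff_mult_Cons:
  "coeff_mult c d (x # g) =
     (\<Sum>p\<in>tadd_splits x. coeff_mult (coeff_shift c (fst p)) (coeff_shift d (snd p)) g)"
proof -
  have inj: "inj_on (\<lambda>(p, s). p # s) (tadd_splits x \<times> splittings g)"
    by (auto simp: inj_on_def)
  have "coeff_mult c d (x # g) = (\<Sum>(p, s)\<in>tadd_splits x \<times> splittings g.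
      c (strip_zeros (map fst (p # s))) * d (strip_zeros (map snd (p # s))))"
    unfolding coeff_mult_def splittings_Cons
    by (subst sum.reindex[OF inj]) (simp add: comp_def case_prod_unfold)
  also have "\<dots> = (\<Sum>p\<in>tadd_splits x. \<Sum>s\<in>splittings g.
      c (strip_zeros (map fst (p # s))) * d (strip_zeros (map snd (p # s))))"
    by (simp add: sum.cartesian_product)
  also have "\<dots> = (\<Sum>p\<in>tadd_splits x. coeff_mult (coeff_shift c (fst p)) (coeff_shift d (snd p)) g)"
    by (auto simp: coeff_mult_def coeff_shift_def strip_zeros_def intro!: sum.cong)
  finally show ?thesis .
qed

lemma coeff_mult_zero_left [simp]: "coeff_mult (\<lambda>_. 0) d g = 0"
  and coeff_mult_zero_right [simp]: "coeff_mult c (\<lambda>_. 0) g = 0"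
  by (simp_all add: coeff_mult_def)

lemma coeff_mult_scale: "coeff_mult (\<lambda>x. s * c x) (\<lambda>x. t * d x) g = s * t * coeff_mult c d g"
  by (simp add: coeff_mult_def sum_distrib_left algebra_simps)

lemma coeff_mult_sum:
  assumes "finite S" "finite T"
  shows "coeff_mult (\<lambda>x. \<Sum>a\<in>S. c a * e a x) (\<lambda>x. \<Sum>b\<in>T. d b * f b x) g
     = (\<Sum>a\<in>S. \<Sum>b\<in>T. c a * d b * coeff_mult (e a) (f b) g)"
proof -
  let ?m = "\<lambda>s a b. c a * d b * (e a (strip_zeros (map fst s)) * f b (strip_zeros (map snd s)))"
  have "coeff_mult (\<lambda>x. \<Sum>a\<in>S. c a * e a x) (\<lambda>x. \<Sum>b\<in>T. d b * f b x) g
     = (\<Sum>s\<in>splittings g. \<Sum>a\<in>S. \<Sum>b\<in>T. ?m s a b)"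
    unfolding coeff_mult_def sum_product by (intro sum.cong refl) (simp only: ac_simps)
  also have "\<dots> = (\<Sum>a\<in>S. \<Sum>b\<in>T. \<Sum>s\<in>splittings g. ?m s a b)"
    by (subst sum.swap) (intro sum.cong refl sum.swap)
  also have "\<dots> = (\<Sum>a\<in>S. \<Sum>b\<in>T. c a * d b * coeff_mult (e a) (f b) g)"
    by (simp add: coeff_mult_def sum_distrib_left)
  finally show ?thesis .
qed

definition delta :: "ntil list \<Rightarrow> ntil list \<Rightarrow> 'k::comm_ring_1" where
  "delta u = (\<lambda>g. if g = u then 1 else 0)"

definition cons_coeff :: "ntil \<Rightarrow> (ntil list \<Rightarrow> 'k::comm_ring_1) \<Rightarrow> ntil list \<Rightarrow> 'k" where
  "cons_coeff a F = (\<lambda>g. case g of [] \<Rightarrow> 0 | x # g' \<Rightarrow> if x = a then F g' else 0)"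

text \<open>The coefficients of the quasi-shuffle product \<open>M\<^sub>u M\<^sub>v = \<Sum>\<^sub>g qshuffle u v g M\<^sub>g\<close>:
  the first letter of \<open>g\<close> comes from \<open>u\<close>, from \<open>v\<close>, or is the sum of both first letters.\<close>
fun qshuffle :: "ntil list \<Rightarrow> ntil list \<Rightarrow> ntil list \<Rightarrow> 'k::comm_ring_1" where
  "qshuffle [] v = delta v"
| "qshuffle (a # u) [] = delta (a # u)"
| "qshuffle (a # u) (b # v) = (\<lambda>g. cons_coeff a (qshuffle u (b # v)) g
     + cons_coeff b (qshuffle (a # u) v) g + cons_coeff (tadd a b) (qshuffle u v) g)"

lemma qshuffle_Nil_right [simp]: "qshuffle u [] = delta u"
  by (cases u) auto

lemma is_comp_Cons: "is_comp (a # u) \<longleftrightarrow> a \<noteq> Nt 0 \<and> is_comp u"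
  by (auto simp: is_comp_def)

lemma is_comp_tl: "is_comp u \<Longrightarrow> is_comp (tl u)"
  by (cases u) (auto simp: is_comp_Cons)

lemma is_comp_hd: "is_comp u \<Longrightarrow> u \<noteq> [] \<Longrightarrow> hd u \<noteq> Nt 0"
  by (cases u) (auto simp: is_comp_Cons)

lemma coeff_shift_delta: "coeff_shift (delta u) a =
  (if a = Nt 0 then delta u else if u \<noteq> [] \<and> hd u = a then delta (tl u) else (\<lambda>_. 0))"
  by (cases u) (auto simp: coeff_shift_def delta_def fun_eq_iff)

lemma coeff_mult_delta:
  assumes "is_comp u" "is_comp v" "is_comp g"
  shows "coeff_mult (delta u) (delta v) g = (qshuffle u v g :: 'k::comm_ring_1)"
  using assms
proof (induction g arbitrary: u v)
  case Nil
  then show ?case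
    by (cases u; cases v) (auto simp: coeff_mult_Nil delta_def cons_coeff_def)
next
  case (Cons x g)
  have x: "x \<noteq> Nt 0" and g: "is_comp g" using Cons.prems by (auto simp: is_comp_Cons)
  define T where "T p = (coeff_mult (coeff_shift (delta u) (fst p)) (coeff_shift (delta v) (snd p)) g :: 'k)"
    for p
  define R where "R = {p \<in> tadd_splits x. fst p \<noteq> Nt 0 \<and> snd p \<noteq> Nt 0}"
  have IH: "coeff_mult (delta u') (delta v') g = (qshuffle u' v' g :: 'k)"
    if "is_comp u'" "is_comp v'" for u' v'
    using Cons.IH[OF that g] .
  note comps = is_comp_tl[OF Cons.prems(1)] is_comp_tl[OF Cons.prems(2)] Cons.prems(1,2)
  have T_left: "T (x, Nt 0) = (if u \<noteq> [] \<and> hd u = x then qshuffle (tl u) v g else 0)"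
    using x IH comps by (simp add: T_def coeff_shift_delta)
  have T_right: "T (Nt 0, x) = (if v \<noteq> [] \<and> hd v = x then qshuffle u (tl v) g else 0)"
    using x IH comps by (simp add: T_def coeff_shift_delta)
  have fin: "finite R" using finite_tadd_splits by (simp add: R_def)
  have "sum T R = (\<Sum>p\<in>R. if p = (hd u, hd v) then
      (if u \<noteq> [] \<and> v \<noteq> [] then qshuffle (tl u) (tl v) g else 0) else 0)"
    using IH comps by (intro sum.cong refl) (auto simp: R_def T_def coeff_shift_delta)
  also have "\<dots> = (if u \<noteq> [] \<and> v \<noteq> [] \<and> tadd (hd u) (hd v) = x then qshuffle (tl u) (tl v) g else 0)"
    unfolding sum.delta[OF fin] using is_comp_hd[OF Cons.prems(1)] is_comp_hd[OF Cons.prems(2)]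
    by (auto simp: R_def tadd_splits_def)
  finally have T_both: "sum T R = \<dots>" .
  have "coeff_mult (delta u) (delta v) (x # g) = T (x, Nt 0) + T (Nt 0, x) + sum T R"
    unfolding coeff_mult_Cons T_def[symmetric] tadd_splits_eq[OF x, folded R_def]
    using finite_tadd_splits[of x] x by (simp add: R_def add.assoc)
  also have "\<dots> = qshuffle u v (x # g)"
    unfolding T_left T_right T_both by (cases u; cases v) (auto simp: delta_def cons_coeff_def)
  finally show ?case .
qed

definition weight :: "ntil list \<Rightarrow> nat" where
  "weight g = sum_list (map nt_val g)"

lemma ell_eps_Cons: "ell_eps (a # g) = (if a = Eps then Suc (ell_eps g) else ell_eps g)"
  by (simp add: ell_eps_def)

lemma bar_Cons: "bar (a # g) = (if a = Eps then bar g else a # bar g)"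
  by (simp add: bar_def)

lemma ell_eps_Nil [simp]: "ell_eps [] = 0"
  by (simp add: ell_eps_def)

lemma bar_Nil [simp]: "bar [] = []"
  by (simp add: bar_def)

lemma ell_eps_append: "ell_eps (u @ v) = ell_eps u + ell_eps v"
  by (simp add: ell_eps_def)

lemma ell_eps_eq_0: "Eps \<notin> set u \<Longrightarrow> ell_eps u = 0"
  by (simp add: ell_eps_def filter_empty_conv) metis

lemma cons_coeff_nonzero: "cons_coeff a F g \<noteq> 0 \<Longrightarrow> \<exists>g'. g = a # g' \<and> F g' \<noteq> 0"
  by (cases g) (auto simp: cons_coeff_def split: if_splits)

lemma tadd_eq_Eps: "tadd a b = Eps \<Longrightarrow> a = Eps \<or> b = Eps"
  by (cases a; cases b) (auto split: if_splits)

lemma qshuffle_nonzero_cases: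
  assumes "qshuffle (a # u) (b # v) g \<noteq> (0::'k::comm_ring_1)"
  obtains (left) g' where "g = a # g'" "qshuffle u (b # v) g' \<noteq> (0::'k)"
    | (right) g' where "g = b # g'" "qshuffle (a # u) v g' \<noteq> (0::'k)"
    | (both) g' where "g = tadd a b # g'" "qshuffle u v g' \<noteq> (0::'k)"
proof -
  have "cons_coeff a (qshuffle u (b # v)) g \<noteq> (0::'k) \<or> cons_coeff b (qshuffle (a # u) v) g \<noteq> (0::'k)
      \<or> cons_coeff (tadd a b) (qshuffle u v) g \<noteq> (0::'k)"
    using assms by (metis add_0 qshuffle.simps(3))
  then show ?thesis using that by (auto dest!: cons_coeff_nonzero)
qed

lemma qshuffle_supp:
  "qshuffle u v g \<noteq> (0::'k::comm_ring_1) \<Longrightarrow>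
     length g \<le> length u + length v \<and> weight g = weight u + weight v
     \<and> ell_eps g \<le> ell_eps u + ell_eps v \<and> (is_comp u \<longrightarrow> is_comp v \<longrightarrow> is_comp g)"
proof (induction u v arbitrary: g rule: qshuffle.induct)
  case (3 a u b v)
  from "3.prems" show ?case
  proof (cases rule: qshuffle_nonzero_cases)
    case (both g')
    then show ?thesis using "3.IH"(3)[of g'] tadd_eq_Eps[of a b]
      by (auto simp: weight_def nt_val_tadd ell_eps_Cons is_comp_Cons tadd_eq_zero_iff)
  qed (use "3.IH" in \<open>auto simp: weight_def ell_eps_Cons is_comp_Cons\<close>)
qed (auto simp: delta_def weight_def split: if_splits)

lemma finite_supp_qshuffle: "finite {g. qshuffle u v g \<noteq> 0}"
proof -
  let ?A = "insert Eps (Nt ` {..weight u + weight v})"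
  have "{g. qshuffle u v g \<noteq> 0} \<subseteq> {g. set g \<subseteq> ?A \<and> length g \<le> length u + length v}"
  proof
    fix g assume g: "g \<in> {g. qshuffle u v g \<noteq> 0}"
    have "x \<in> ?A" if "x \<in> set g" for x
    proof -
      have "nt_val x \<le> weight g"
        using that by (simp add: weight_def member_le_sum_list)
      then have "nt_val x \<le> weight u + weight v" using g qshuffle_supp by fastforce
      then show ?thesis by (cases x) auto
    qed
    then show "g \<in> {g. set g \<subseteq> ?A \<and> length g \<le> length u + length v}"
      using g qshuffle_supp by blast
  qed
  moreover have "finite {g. set g \<subseteq> ?A \<and> length g \<le> length u + length v}"
    by (rule finite_lists_length_le) auto
  ultimately show ?thesis by (rule finite_subset)
qed

section \<open>Multiplicativity of the map on coefficients\<close>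

text \<open>Coefficient matrices of the map: \<open>signed_bar\<close> sends \<open>M\<^sub>g\<close> to \<open>(-1)\<^bsup>\<ell>\<^sub>\<epsilon>(g)\<^esup> M\<^bsub>bar g\<^esub>\<close>,
  and \<open>phi_coeff\<close> additionally kills the \<open>M\<^sub>g\<close> with \<open>g \<in> C_eps\<close>.\<close>
definition signed_bar :: "ntil list \<Rightarrow> ntil list \<Rightarrow> 'k::comm_ring_1" where
  "signed_bar g w = (if w = bar g then (-1) ^ ell_eps g else 0)"

definition phi_coeff :: "ntil list \<Rightarrow> ntil list \<Rightarrow> 'k::comm_ring_1" where
  "phi_coeff g w = (if g = [] \<or> hd g \<noteq> Eps then signed_bar g w else 0)"

definition coeff_transform ::
    "(ntil list \<Rightarrow> ntil list \<Rightarrow> 'k::comm_ring_1) \<Rightarrow> (ntil list \<Rightarrow> 'k) \<Rightarrow> ntil list \<Rightarrow> 'k" where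
  "coeff_transform T F w = (\<Sum>g\<in>{g. F g \<noteq> 0}. F g * T g w)"

lemma coeff_transform_eq_sum:
  assumes "finite U" "{g. F g \<noteq> 0} \<subseteq> U"
  shows "coeff_transform T F w = (\<Sum>g\<in>U. F g * T g w)"
  unfolding coeff_transform_def by (rule sum.mono_neutral_left) (use assms in auto)

lemma coeff_transform_add:
  assumes "finite {g. F g \<noteq> 0}" "finite {g. G g \<noteq> 0}"
  shows "coeff_transform T (\<lambda>g. F g + G g) w = coeff_transform T F w + coeff_transform T G w"
proof -
  let ?U = "{g. F g \<noteq> 0} \<union> {g. G g \<noteq> 0}"
  have "coeff_transform T (\<lambda>g. F g + G g) w = (\<Sum>g\<in>?U. (F g + G g) * T g w)"
    by (rule coeff_transform_eq_sum) (use assms in auto)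
  also have "\<dots> = (\<Sum>g\<in>?U. F g * T g w) + (\<Sum>g\<in>?U. G g * T g w)"
    by (simp add: distrib_right sum.distrib)
  also have "\<dots> = coeff_transform T F w + coeff_transform T G w"
    using coeff_transform_eq_sum[of ?U F T w] coeff_transform_eq_sum[of ?U G T w] assms by auto
  finally show ?thesis .
qed

lemma coeff_transform_delta: "coeff_transform T (delta u) w = T u w"
  by (simp add: coeff_transform_def delta_def)

lemma supp_cons_coeff: "{g. cons_coeff a F g \<noteq> 0} = Cons a ` {g. F g \<noteq> 0}"
proof (rule set_eqI)
  fix g show "g \<in> {g. cons_coeff a F g \<noteq> 0} \<longleftrightarrow> g \<in> Cons a ` {g. F g \<noteq> 0}"
    by (cases g) (auto simp: cons_coeff_def)
qed

lemma coeff_transform_cons_coeff: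
  "coeff_transform T (cons_coeff a F) w = coeff_transform (\<lambda>g. T (a # g)) F w"
proof -
  have "coeff_transform T (cons_coeff a F) w =
      (\<Sum>g\<in>Cons a ` {g. F g \<noteq> 0}. cons_coeff a F g * T g w)"
    by (simp add: coeff_transform_def supp_cons_coeff)
  also have "\<dots> = coeff_transform (\<lambda>g. T (a # g)) F w"
    by (subst sum.reindex) (auto simp: inj_on_def coeff_transform_def cons_coeff_def)
  finally show ?thesis .
qed

lemma cons_coeff_scale: "cons_coeff a (\<lambda>w. c * F w) w = c * cons_coeff a F w"
  by (cases w) (auto simp: cons_coeff_def)

lemma cons_coeff_neg: "cons_coeff a (\<lambda>w. - F w) w = - cons_coeff a F w"
  by (cases w) (auto simp: cons_coeff_def)

lemma signed_bar_Cons: "signed_bar (a # g) w =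
  (if a = Eps then - signed_bar g w else cons_coeff a (signed_bar g) w)"
  by (cases w) (auto simp: signed_bar_def bar_Cons ell_eps_Cons cons_coeff_def)

lemma coeff_transform_signed_bar_cons_coeff:
  "coeff_transform signed_bar (cons_coeff a F) w =
     (if a = Eps then - coeff_transform signed_bar F w
      else cons_coeff a (coeff_transform signed_bar F) w)"
  by (simp only: coeff_transform_cons_coeff)
    (cases w; auto simp: signed_bar_Cons coeff_transform_def cons_coeff_def sum_negf)

lemma coeff_transform_phi_coeff_cons_coeff:
  "coeff_transform phi_coeff (cons_coeff a F) w =
     (if a = Eps then 0 else coeff_transform signed_bar (cons_coeff a F) w)"
  unfolding coeff_transform_cons_coeff by (simp add: phi_coeff_def coeff_transform_def)

lemma coeff_transform_qshuffle_Cons: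
  fixes T :: "ntil list \<Rightarrow> ntil list \<Rightarrow> 'k::comm_ring_1"
  shows "coeff_transform T (qshuffle (a # u) (b # v)) w =
    coeff_transform T (cons_coeff a (qshuffle u (b # v))) w
    + coeff_transform T (cons_coeff b (qshuffle (a # u) v)) w
    + coeff_transform T (cons_coeff (tadd a b) (qshuffle u v)) w"
proof -
  have fin: "finite {g. cons_coeff c (qshuffle u' v') g \<noteq> (0::'k)}" for c u' v'
    unfolding supp_cons_coeff using finite_supp_qshuffle by blast
  have fin2: "finite {g. cons_coeff a (qshuffle u (b # v)) g
      + cons_coeff b (qshuffle (a # u) v) g \<noteq> (0::'k)}"
    by (rule finite_subset[OF _ finite_UnI[OF fin[of a u "b # v"] fin[of b "a # u" v]]]) auto
  show ?thesis
    by (simp only: qshuffle.simps coeff_transform_add[OF fin2 fin] coeff_transform_add[OF fin fin])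
qed

lemma tadd_Eps_left: "b \<noteq> Nt 0 \<Longrightarrow> tadd Eps b = b"
  and tadd_Eps_right: "b \<noteq> Nt 0 \<Longrightarrow> tadd b Eps = b"
  by (cases b; simp)+

lemma tadd_neq_Eps: "a \<noteq> Eps \<Longrightarrow> b \<noteq> Eps \<Longrightarrow> tadd a b \<noteq> Eps"
  by (cases a; cases b) auto

text \<open>If one factor starts with \<open>\<epsilon>\<close> and the other with a letter \<open>b\<close>, the term starting with \<open>b\<close>
  and the term in which \<open>\<epsilon>\<close> and \<open>b\<close> merge into \<open>b\<close> differ by exactly one \<open>\<epsilon>\<close> and cancel.\<close>
lemma coeff_transform_signed_bar_qshuffle:
  "is_comp u \<Longrightarrow> is_comp v \<Longrightarrow>
   coeff_transform signed_bar (qshuffle u v :: ntil list \<Rightarrow> 'k::comm_ring_1) =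
     (\<lambda>w. (-1) ^ (ell_eps u + ell_eps v) * qshuffle (bar u) (bar v) w)"
proof (induction u v rule: qshuffle.induct)
  case (3 a u b v)
  have comps: "is_comp u" "is_comp v" and a: "a \<noteq> Nt 0" and b: "b \<noteq> Nt 0"
    using "3.prems" by (auto simp: is_comp_Cons)
  note IH = "3.IH"(1)[OF comps(1) "3.prems"(2)] "3.IH"(2)[OF "3.prems"(1) comps(2)]
    "3.IH"(3)[OF comps]
  show ?case
  proof
    fix w show "coeff_transform signed_bar (qshuffle (a # u) (b # v) :: _ \<Rightarrow> 'k) w =
      (-1) ^ (ell_eps (a # u) + ell_eps (b # v)) * qshuffle (bar (a # u)) (bar (b # v)) w"
      unfolding coeff_transform_qshuffle_Cons coeff_transform_signed_bar_cons_coeff IH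
      using a b tadd_neq_Eps[of a b]
      by (cases "a = Eps"; cases "b = Eps")
        (simp_all add: ell_eps_Cons bar_Cons tadd_Eps_left tadd_Eps_right cons_coeff_scale
          cons_coeff_neg distrib_left)
  qed
qed (simp_all add: fun_eq_iff coeff_transform_delta, simp_all add: signed_bar_def delta_def)

lemma coeff_transform_phi_coeff_qshuffle:
  assumes "is_comp u" "is_comp v"
  shows "coeff_transform phi_coeff (qshuffle u v :: ntil list \<Rightarrow> 'k::comm_ring_1) w =
    (if (u = [] \<or> hd u \<noteq> Eps) \<and> (v = [] \<or> hd v \<noteq> Eps)
     then (-1) ^ (ell_eps u + ell_eps v) * qshuffle (bar u) (bar v) w else 0)"
proof (cases "u = [] \<or> v = []")
  case True
  define z where "z = (if u = [] then v else u)"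
  have q: "qshuffle u v = delta z" using True by (auto simp: z_def)
  show ?thesis unfolding q coeff_transform_delta
    using True by (auto simp: z_def phi_coeff_def signed_bar_def delta_def)
next
  case False
  then obtain a u' b v' where uv: "u = a # u'" "v = b # v'" by (meson neq_Nil_conv)
  have comps: "is_comp u'" "is_comp v'" "is_comp (Eps # u')" "is_comp (Eps # v')"
    and a: "a \<noteq> Nt 0" and b: "b \<noteq> Nt 0"
    using assms uv by (auto simp: is_comp_Cons)
  show ?thesis
  proof (cases "a = Eps \<or> b = Eps")
    case True
    note signed_bar_products = coeff_transform_signed_bar_qshuffle[OF comps(1) assms(2)]
      coeff_transform_signed_bar_qshuffle[OF assms(1) comps(2)]
      coeff_transform_signed_bar_qshuffle[OF comps(1,2)]
      coeff_transform_signed_bar_qshuffle[OF comps(3,2)]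
      coeff_transform_signed_bar_qshuffle[OF comps(1,4)]
    show ?thesis
      unfolding uv coeff_transform_qshuffle_Cons coeff_transform_phi_coeff_cons_coeff
        coeff_transform_signed_bar_cons_coeff
      using True a b
      by (elim disjE; cases "a = Eps"; cases "b = Eps")
        (simp_all add: uv signed_bar_products ell_eps_Cons bar_Cons tadd_Eps_left tadd_Eps_right
          cons_coeff_scale cons_coeff_neg)
  next
    case False
    then have "coeff_transform phi_coeff (qshuffle u v :: _ \<Rightarrow> 'k) w =
        coeff_transform signed_bar (qshuffle u v) w"
      unfolding uv coeff_transform_qshuffle_Cons coeff_transform_phi_coeff_cons_coeff
      using tadd_neq_Eps[of a b] by simp
    then show ?thesis
      using False fun_cong[OF coeff_transform_signed_bar_qshuffle[OF assms], of w] by (simp add: uv)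
  qed
qed

section \<open>The algebra WCQSym\<close>

definition comp_coeff :: "(ntil list \<Rightarrow> 'k::zero) \<Rightarrow> bool" where
  "comp_coeff c \<longleftrightarrow> finite {g. c g \<noteq> 0} \<and> (\<forall>g. c g \<noteq> 0 \<longrightarrow> is_comp g)"

lemma is_comp_nzvals: "is_comp (nzvals h)"
proof -
  have "set (sorted_list_of_set {i. h i \<noteq> Nt 0}) \<subseteq> {i. h i \<noteq> Nt 0}"
    by (cases "finite {i. h i \<noteq> Nt 0}") auto
  then show ?thesis unfolding is_comp_def nzvals_def by auto
qed

lemma series_of_cong: "(\<And>g. is_comp g \<Longrightarrow> c g = d g) \<Longrightarrow> series_of c = series_of d"
  by (auto simp: series_of_def fun_eq_iff is_comp_nzvals)

lemma Mser_eq_series_of: "Mser a = series_of (delta a)"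
  by (auto simp: Mser_def series_of_def delta_def fun_eq_iff)

lemma series_of_eq_sum:
  assumes "finite S"
  shows "(\<lambda>h. \<Sum>a\<in>S. c a * Mser a h) = series_of (\<lambda>g. if g \<in> S then c g else 0)"
  using assms by (auto simp: Mser_def series_of_def fun_eq_iff if_distrib[of "\<lambda>x. _ * x"] sum.delta cong: if_cong)

lemma series_of_eq_sum_supp:
  assumes "finite {g. c g \<noteq> 0}"
  shows "series_of c = (\<lambda>h. \<Sum>a\<in>{g. c g \<noteq> 0}. c a * Mser a h)"
  unfolding series_of_eq_sum[OF assms] by (rule series_of_cong) auto

lemma WCQSym_iff: "x \<in> WCQSym \<longleftrightarrow> (\<exists>c. comp_coeff c \<and> x = series_of c)"
proof
  assume "x \<in> WCQSym"
  then obtain S c where S: "finite S" "\<forall>a\<in>S. is_comp a" "x = (\<lambda>h. \<Sum>a\<in>S. c a * Mser a h)"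
    by (auto simp: WCQSym_def)
  moreover have "comp_coeff (\<lambda>g. if g \<in> S then c g else 0)"
    using S by (auto simp: comp_coeff_def intro: finite_subset[OF _ S(1)])
  ultimately show "\<exists>c. comp_coeff c \<and> x = series_of c"
    using series_of_eq_sum by blast
next
  assume "\<exists>c. comp_coeff c \<and> x = series_of c"
  then show "x \<in> WCQSym"
    unfolding WCQSym_def comp_coeff_def using series_of_eq_sum_supp by blast
qed

lemma series_of_in_WCQSym: "comp_coeff c \<Longrightarrow> series_of c \<in> WCQSym"
  using WCQSym_iff by blast

lemma sadd_series_of: "sadd (series_of c) (series_of d) = series_of (\<lambda>g. c g + d g)"
  by (auto simp: sadd_def series_of_def fun_eq_iff)

lemma sscale_series_of: "sscale k (series_of c) = series_of (\<lambda>g. k * c g)"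
  by (auto simp: sscale_def series_of_def fun_eq_iff)

lemma szero_eq_series_of: "szero = series_of (\<lambda>g. 0)"
  by (auto simp: szero_def series_of_def fun_eq_iff)

lemma comp_coeff_add:
  fixes c d :: "ntil list \<Rightarrow> 'k::comm_ring_1"
  assumes "comp_coeff c" "comp_coeff d"
  shows "comp_coeff (\<lambda>g. c g + d g)"
proof -
  have "{g. c g + d g \<noteq> 0} \<subseteq> {g. c g \<noteq> 0} \<union> {g. d g \<noteq> 0}" by auto
  then show ?thesis using assms finite_subset unfolding comp_coeff_def by auto
qed

lemma comp_coeff_scale:
  fixes c :: "ntil list \<Rightarrow> 'k::comm_ring_1"
  assumes "comp_coeff c"
  shows "comp_coeff (\<lambda>g. k * c g)"
proof -
  have "{g. k * c g \<noteq> 0} \<subseteq> {g. c g \<noteq> 0}" by auto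
  then show ?thesis using assms finite_subset unfolding comp_coeff_def by auto
qed

lemma comp_coeff_delta: "is_comp a \<Longrightarrow> comp_coeff (delta a)"
  by (simp add: comp_coeff_def delta_def)

lemma Mser_in_WCQSym: "is_comp a \<Longrightarrow> Mser a \<in> WCQSym"
  by (simp add: Mser_eq_series_of series_of_in_WCQSym comp_coeff_delta)

lemma szero_in_WCQSym: "szero \<in> WCQSym"
  unfolding szero_eq_series_of by (rule series_of_in_WCQSym) (simp add: comp_coeff_def)

lemma sadd_in_WCQSym:
  assumes "x \<in> WCQSym" "y \<in> WCQSym"
  shows "sadd x y \<in> WCQSym"
proof -
  obtain c d where "comp_coeff c" "x = series_of c" "comp_coeff d" "y = series_of d"
    using assms unfolding WCQSym_iff by blast
  then show ?thesis by (simp add: sadd_series_of series_of_in_WCQSym comp_coeff_add)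
qed

lemma sscale_in_WCQSym:
  assumes "x \<in> WCQSym"
  shows "sscale k x \<in> WCQSym"
proof -
  obtain c where "comp_coeff c" "x = series_of c"
    using assms unfolding WCQSym_iff by blast
  then show ?thesis by (simp add: sscale_series_of series_of_in_WCQSym comp_coeff_scale)
qed

lemma coeff_eq_sum_delta:
  assumes "finite S" "{g. c g \<noteq> 0} \<subseteq> S"
  shows "c = (\<lambda>x. \<Sum>a\<in>S. c a * delta a x)"
proof
  fix x
  have "(\<Sum>a\<in>S. c a * delta a x) = (\<Sum>a\<in>S. if a = x then c a else 0)"
    by (rule sum.cong) (simp_all add: delta_def)
  also have "\<dots> = c x" using assms by (auto simp: sum.delta')
  finally show "c x = (\<Sum>a\<in>S. c a * delta a x)" by simp
qed

lemma coeff_mult_eq_sum_qshuffle: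
  fixes c d :: "ntil list \<Rightarrow> 'k::comm_ring_1"
  assumes S: "finite S" "{g. c g \<noteq> 0} \<subseteq> S" "\<forall>a\<in>S. is_comp a"
    and T: "finite T" "{g. d g \<noteq> 0} \<subseteq> T" "\<forall>a\<in>T. is_comp a"
    and g: "is_comp g"
  shows "coeff_mult c d g = (\<Sum>a\<in>S. \<Sum>b\<in>T. c a * d b * qshuffle a b g)"
proof -
  have "coeff_mult c d g =
      coeff_mult (\<lambda>x. \<Sum>a\<in>S. c a * delta a x) (\<lambda>x. \<Sum>b\<in>T. d b * delta b x) g"
    by (rule arg_cong2[where f = "\<lambda>x y. coeff_mult x y g",
          OF coeff_eq_sum_delta[OF S(1,2)] coeff_eq_sum_delta[OF T(1,2)]])
  also have "\<dots> = (\<Sum>a\<in>S. \<Sum>b\<in>T. c a * d b * coeff_mult (delta a) (delta b) g)"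
    by (rule coeff_mult_sum[OF S(1) T(1)])
  also have "\<dots> = (\<Sum>a\<in>S. \<Sum>b\<in>T. c a * d b * qshuffle a b g)"
    using S(3) T(3) g by (auto simp: coeff_mult_delta intro!: sum.cong)
  finally show ?thesis .
qed

definition coeff_prod :: "(ntil list \<Rightarrow> 'k::comm_ring_1) \<Rightarrow> (ntil list \<Rightarrow> 'k) \<Rightarrow> ntil list \<Rightarrow> 'k" where
  "coeff_prod c d g = (\<Sum>a\<in>{g. c g \<noteq> 0}. \<Sum>b\<in>{g. d g \<noteq> 0}. c a * d b * qshuffle a b g)"

lemma smult_series_of_comp_coeff:
  "comp_coeff c \<Longrightarrow> comp_coeff d \<Longrightarrow> smult (series_of c) (series_of d) = series_of (coeff_prod c d)"
  unfolding smult_series_of coeff_prod_def comp_coeff_def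
  by (rule series_of_cong, rule coeff_mult_eq_sum_qshuffle) auto

lemma supp_coeff_prod:
  fixes c d :: "ntil list \<Rightarrow> 'k::comm_ring_1"
  shows "{g. coeff_prod c d g \<noteq> 0} \<subseteq>
     (\<Union>a\<in>{g. c g \<noteq> 0}. \<Union>b\<in>{g. d g \<noteq> 0}. {g. qshuffle a b g \<noteq> (0::'k)})"
proof
  fix g assume "g \<in> {g. coeff_prod c d g \<noteq> 0}"
  then have "(\<Sum>a\<in>{g. c g \<noteq> 0}. \<Sum>b\<in>{g. d g \<noteq> 0}. c a * d b * qshuffle a b g) \<noteq> 0"
    by (simp add: coeff_prod_def)
  then obtain a where a: "a \<in> {g. c g \<noteq> 0}"
    "(\<Sum>b\<in>{g. d g \<noteq> 0}. c a * d b * qshuffle a b g) \<noteq> 0"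
    by (meson sum.neutral)
  then obtain b where b: "b \<in> {g. d g \<noteq> 0}" "c a * d b * qshuffle a b g \<noteq> 0"
    by (meson sum.neutral)
  then have "qshuffle a b g \<noteq> (0::'k)" by (metis mult_zero_right)
  with a b show "g \<in> (\<Union>a\<in>{g. c g \<noteq> 0}. \<Union>b\<in>{g. d g \<noteq> 0}. {g. qshuffle a b g \<noteq> (0::'k)})"
    by blast
qed

lemma comp_coeff_coeff_prod:
  assumes "comp_coeff c" "comp_coeff d"
  shows "comp_coeff (coeff_prod c d)"
  unfolding comp_coeff_def
proof
  show "finite {g. coeff_prod c d g \<noteq> 0}"
    by (rule finite_subset[OF supp_coeff_prod])
      (use assms finite_supp_qshuffle in \<open>auto simp: comp_coeff_def\<close>)
  show "\<forall>g. coeff_prod c d g \<noteq> 0 \<longrightarrow> is_comp g"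
    using supp_coeff_prod[of c d] assms qshuffle_supp unfolding comp_coeff_def by blast
qed

lemma smult_in_WCQSym:
  assumes "x \<in> WCQSym" "y \<in> WCQSym"
  shows "smult x y \<in> WCQSym"
proof -
  obtain c d where "comp_coeff c" "x = series_of c" "comp_coeff d" "y = series_of d"
    using assms unfolding WCQSym_iff by blast
  then show ?thesis
    by (simp add: smult_series_of_comp_coeff series_of_in_WCQSym comp_coeff_coeff_prod)
qed

section \<open>Reduction of WCQSym to QSym modulo the ideal\<close>

lemma gen_ideal_least:
  assumes "I \<subseteq> A" "B \<subseteq> I" "szero \<in> I" "\<And>x y. x \<in> I \<Longrightarrow> y \<in> I \<Longrightarrow> sadd x y \<in> I"
    "\<And>a x. a \<in> A \<Longrightarrow> x \<in> I \<Longrightarrow> smult a x \<in> I"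
  shows "gen_ideal A B \<subseteq> I"
  unfolding gen_ideal_def by (rule Inter_lower) (use assms in blast)

lemma generators_subset_gen_ideal: "B \<subseteq> gen_ideal A B"
  and szero_in_gen_ideal: "szero \<in> gen_ideal A B"
  and sadd_in_gen_ideal: "x \<in> gen_ideal A B \<Longrightarrow> y \<in> gen_ideal A B \<Longrightarrow> sadd x y \<in> gen_ideal A B"
  and smult_in_gen_ideal: "a \<in> A \<Longrightarrow> x \<in> gen_ideal A B \<Longrightarrow> smult a x \<in> gen_ideal A B"
  unfolding gen_ideal_def by blast+

abbreviation eps_ideal :: "'k::comm_ring_1 ser set" where
  "eps_ideal \<equiv> gen_ideal WCQSym {Mser \<alpha> | \<alpha>. \<alpha> \<in> C_eps}"

lemma eps_ideal_subset_WCQSym: "eps_ideal \<subseteq> WCQSym"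
proof (rule gen_ideal_least)
  show "{Mser \<alpha> | \<alpha>. \<alpha> \<in> C_eps} \<subseteq> WCQSym"
    using Mser_in_WCQSym unfolding C_eps_def by blast
qed (simp_all add: szero_in_WCQSym sadd_in_WCQSym smult_in_WCQSym)

lemma Mser_in_eps_ideal: "\<alpha> \<in> C_eps \<Longrightarrow> Mser \<alpha> \<in> eps_ideal"
  by (rule subsetD[OF generators_subset_gen_ideal]) blast

lemma smult_sscale_left: "smult (sscale k a) x = sscale k (smult a x)"
  by (simp add: smult_def sscale_def sum_distrib_left mult.assoc fun_eq_iff)

lemma smult_Mser_Nil:
  assumes "x \<in> WCQSym"
  shows "smult (Mser []) x = x"
proof -
  obtain d where d: "comp_coeff d" "x = series_of d"
    using assms unfolding WCQSym_iff by blast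
  have "coeff_prod (delta []) d = d"
  proof
    fix g
    have "coeff_prod (delta []) d g = (\<Sum>b\<in>{g. d g \<noteq> 0}. if b = g then d b else 0)"
      by (simp add: coeff_prod_def delta_def) (intro sum.cong; simp add: delta_def)
    also have "\<dots> = d g" using d(1) by (simp add: comp_coeff_def sum.delta')
    finally show "coeff_prod (delta []) d g = d g" .
  qed
  then show ?thesis
    using d smult_series_of_comp_coeff[OF comp_coeff_delta d(1), of "[]"]
    by (simp add: Mser_eq_series_of is_comp_def)
qed

lemma sscale_in_eps_ideal:
  assumes "x \<in> eps_ideal"
  shows "sscale k x \<in> eps_ideal"
proof -
  have "x \<in> WCQSym" using assms eps_ideal_subset_WCQSym by blast
  then have "sscale k x = smult (sscale k (Mser [])) x"
    by (simp add: smult_sscale_left smult_Mser_Nil)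
  also have "\<dots> \<in> eps_ideal"
    by (intro smult_in_gen_ideal sscale_in_WCQSym Mser_in_WCQSym assms) (simp add: is_comp_def)
  finally show ?thesis .
qed

definition QSym :: "'k::comm_ring_1 ser set" where
  "QSym = series_of ` {c. comp_coeff c \<and> (\<forall>g. c g \<noteq> 0 \<longrightarrow> Eps \<notin> set g)}"

lemma QSym_subset_WCQSym: "QSym \<subseteq> WCQSym"
  unfolding QSym_def using series_of_in_WCQSym by blast

lemma szero_in_QSym: "szero \<in> QSym"
  unfolding QSym_def szero_eq_series_of by (rule imageI) (simp add: comp_coeff_def)

lemma sadd_in_QSym:
  assumes "p \<in> QSym" "q \<in> QSym"
  shows "sadd p q \<in> QSym"
proof -
  obtain c d where c: "comp_coeff c" "\<forall>g. c g \<noteq> 0 \<longrightarrow> Eps \<notin> set g" "p = series_of c"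
    and d: "comp_coeff d" "\<forall>g. d g \<noteq> 0 \<longrightarrow> Eps \<notin> set g" "q = series_of d"
    using assms unfolding QSym_def by blast
  have "\<forall>g. c g + d g \<noteq> 0 \<longrightarrow> Eps \<notin> set g"
    using c(2) d(2) by (metis add.right_neutral add_0)
  then show ?thesis
    unfolding QSym_def c(3) d(3) sadd_series_of using comp_coeff_add[OF c(1) d(1)] by blast
qed

lemma sscale_in_QSym:
  assumes "p \<in> QSym"
  shows "sscale k p \<in> QSym"
proof -
  obtain c where c: "comp_coeff c" "\<forall>g. c g \<noteq> 0 \<longrightarrow> Eps \<notin> set g" "p = series_of c"
    using assms unfolding QSym_def by blast
  have "\<forall>g. k * c g \<noteq> 0 \<longrightarrow> Eps \<notin> set g"
    using c(2) by (metis mult_zero_right)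
  then show ?thesis
    unfolding QSym_def c(3) sscale_series_of using comp_coeff_scale[OF c(1)] by blast
qed

lemma Mser_in_QSym: "is_comp a \<Longrightarrow> Eps \<notin> set a \<Longrightarrow> Mser a \<in> QSym"
  unfolding QSym_def Mser_eq_series_of
  using comp_coeff_delta[of a] by (intro imageI) (simp add: delta_def)

definition QSym_mod_eps :: "'k::comm_ring_1 ser set" where
  "QSym_mod_eps = {x. \<exists>q\<in>QSym. (\<lambda>h. x h - q h) \<in> eps_ideal}"

lemma eps_ideal_subset_QSym_mod_eps: "eps_ideal \<subseteq> QSym_mod_eps"
proof
  fix x :: "'k::comm_ring_1 ser" assume "x \<in> eps_ideal"
  then have "(\<lambda>h. x h - szero h) \<in> eps_ideal" by (simp add: szero_def)
  then show "x \<in> QSym_mod_eps" unfolding QSym_mod_eps_def using szero_in_QSym by blast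
qed

lemma QSym_subset_QSym_mod_eps: "QSym \<subseteq> QSym_mod_eps"
proof
  fix q :: "'k::comm_ring_1 ser" assume "q \<in> QSym"
  moreover have "(\<lambda>h. q h - q h) \<in> eps_ideal" using szero_in_gen_ideal by (simp add: szero_def)
  ultimately show "q \<in> QSym_mod_eps" unfolding QSym_mod_eps_def by blast
qed

lemma sadd_in_QSym_mod_eps:
  assumes "x \<in> QSym_mod_eps" "y \<in> QSym_mod_eps"
  shows "sadd x y \<in> QSym_mod_eps"
proof -
  obtain p q where p: "p \<in> QSym" "(\<lambda>h. x h - p h) \<in> eps_ideal"
    and q: "q \<in> QSym" "(\<lambda>h. y h - q h) \<in> eps_ideal"
    using assms unfolding QSym_mod_eps_def by blast
  have "(\<lambda>h. sadd x y h - sadd p q h) = sadd (\<lambda>h. x h - p h) (\<lambda>h. y h - q h)"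
    by (simp add: sadd_def fun_eq_iff algebra_simps)
  then have "(\<lambda>h. sadd x y h - sadd p q h) \<in> eps_ideal"
    using sadd_in_gen_ideal[OF p(2) q(2)] by simp
  then show ?thesis unfolding QSym_mod_eps_def using sadd_in_QSym[OF p(1) q(1)] by blast
qed

lemma sscale_in_QSym_mod_eps:
  assumes "x \<in> QSym_mod_eps"
  shows "sscale k x \<in> QSym_mod_eps"
proof -
  obtain p where p: "p \<in> QSym" "(\<lambda>h. x h - p h) \<in> eps_ideal"
    using assms unfolding QSym_mod_eps_def by blast
  have "(\<lambda>h. sscale k x h - sscale k p h) = sscale k (\<lambda>h. x h - p h)"
    by (simp add: sscale_def fun_eq_iff algebra_simps)
  then have "(\<lambda>h. sscale k x h - sscale k p h) \<in> eps_ideal"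
    using sscale_in_eps_ideal[OF p(2)] by simp
  then show ?thesis unfolding QSym_mod_eps_def using sscale_in_QSym[OF p(1)] by blast
qed

lemma sum_in_QSym_mod_eps:
  "finite S \<Longrightarrow> (\<And>a. a \<in> S \<Longrightarrow> X a \<in> QSym_mod_eps) \<Longrightarrow>
     (\<lambda>h. \<Sum>a\<in>S. e a * X a h) \<in> QSym_mod_eps"
proof (induction S rule: finite_induct)
  case empty
  have "szero \<in> QSym_mod_eps" using szero_in_gen_ideal eps_ideal_subset_QSym_mod_eps by blast
  then show ?case by (simp add: szero_def)
next
  case (insert x F)
  have "(\<lambda>h. \<Sum>a\<in>insert x F. e a * X a h) = sadd (sscale (e x) (X x)) (\<lambda>h. \<Sum>a\<in>F. e a * X a h)"
    using insert by (simp add: sadd_def sscale_def)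
  then show ?case using insert by (simp add: sadd_in_QSym_mod_eps sscale_in_QSym_mod_eps)
qed

definition eps_free_prefix :: "ntil list \<Rightarrow> nat" where
  "eps_free_prefix g = length (takeWhile (\<lambda>x. x \<noteq> Eps) g)"

lemma eps_free_prefix_Cons:
  "eps_free_prefix (x # g) = (if x = Eps then 0 else Suc (eps_free_prefix g))"
  by (simp add: eps_free_prefix_def)

lemma eps_free_prefix_le_length: "eps_free_prefix g \<le> length g"
  by (simp add: eps_free_prefix_def length_takeWhile_le)

lemma eps_free_prefix_append_Eps: "Eps \<notin> set u \<Longrightarrow> eps_free_prefix (u @ Eps # w) = length u"
  by (induction u) (auto simp: eps_free_prefix_Cons)

text \<open>Well-founded measure for the reduction modulo the ideal: lexicographic in the number of
  \<open>\<epsilon>\<close>'s and the position of the first \<open>\<epsilon>\<close>, among compositions of bounded length.\<close>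
definition eps_rank :: "ntil list \<Rightarrow> nat" where
  "eps_rank a = ell_eps a * (length a + 1) + eps_free_prefix a"

lemma eps_rank_less:
  assumes "length g \<le> length a"
    and "ell_eps g < ell_eps a \<or> (ell_eps g \<le> ell_eps a \<and> eps_free_prefix g < eps_free_prefix a)"
  shows "eps_rank g < eps_rank a"
  using assms(2)
proof
  assume "ell_eps g < ell_eps a"
  then obtain e where e: "ell_eps a = Suc e" "ell_eps g \<le> e" by (metis lessE less_Suc_eq_le)
  then have "ell_eps g * (length g + 1) \<le> e * (length a + 1)"
    using assms(1) by (intro mult_le_mono) auto
  then show ?thesis using assms(1) eps_free_prefix_le_length[of g] e(1) by (simp add: eps_rank_def)
next
  assume "ell_eps g \<le> ell_eps a \<and> eps_free_prefix g < eps_free_prefix a"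
  moreover have "ell_eps g * (length g + 1) \<le> ell_eps a * (length a + 1)"
    using assms(1) calculation by (intro mult_le_mono) auto
  ultimately show ?thesis by (simp add: eps_rank_def)
qed

text \<open>In \<open>M\<^sub>u M\<^bsub>\<epsilon>w\<^esub>\<close>, with \<open>u\<close> free of \<open>\<epsilon>\<close>, the concatenation \<open>u \<epsilon> w\<close> occurs with coefficient one,
  and every other term has fewer \<open>\<epsilon>\<close>'s or an earlier first \<open>\<epsilon>\<close>.\<close>
lemma qshuffle_eps_concat:
  assumes "is_comp u" "Eps \<notin> set u"
  shows "qshuffle u (Eps # w) (u @ Eps # w) = (1::'k::comm_ring_1)"
  using assms
proof (induction u)
  case (Cons a u)
  have a: "a \<noteq> Eps" "a \<noteq> Nt 0" and u: "is_comp u" "Eps \<notin> set u"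
    using Cons.prems by (auto simp: is_comp_Cons)
  have "qshuffle u w (u @ Eps # w) = (0::'k)"
    using qshuffle_supp[of u w "u @ Eps # w"] by (auto simp: ell_eps_append ell_eps_Cons)
  then show ?case using Cons.IH[OF u] a by (simp add: tadd_Eps_right cons_coeff_def)
qed (simp add: delta_def)

lemma qshuffle_eps_concat_other:
  assumes "is_comp u" "Eps \<notin> set u" "qshuffle u (Eps # w) g \<noteq> (0::'k::comm_ring_1)"
    and "g \<noteq> u @ Eps # w"
  shows "ell_eps g \<le> ell_eps w \<or> eps_free_prefix g < length u"
  using assms
proof (induction u arbitrary: g)
  case (Cons a u)
  have a: "a \<noteq> Eps" "a \<noteq> Nt 0" and u: "is_comp u" "Eps \<notin> set u"
    using Cons.prems by (auto simp: is_comp_Cons)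
  from Cons.prems(3) show ?case
  proof (cases rule: qshuffle_nonzero_cases)
    case (left g')
    then show ?thesis using Cons.IH[OF u, of g'] Cons.prems(4) a
      by (auto simp: ell_eps_Cons eps_free_prefix_Cons)
  next
    case (right g')
    then show ?thesis by (simp add: eps_free_prefix_Cons)
  next
    case (both g')
    then have "ell_eps g' \<le> ell_eps u + ell_eps w" using qshuffle_supp by blast
    then show ?thesis using both a ell_eps_eq_0[OF u(2)] by (simp add: tadd_Eps_right ell_eps_Cons)
  qed
qed (simp add: delta_def)

lemma series_of_qshuffle_eps_in_eps_ideal:
  assumes "is_comp u" "is_comp (Eps # w)"
  shows "series_of (qshuffle u (Eps # w)) \<in> (eps_ideal :: 'k::comm_ring_1 ser set)"
proof -
  have "smult (Mser u) (Mser (Eps # w)) \<in> (eps_ideal :: 'k ser set)"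
    using assms by (intro smult_in_gen_ideal Mser_in_WCQSym Mser_in_eps_ideal) (auto simp: C_eps_def)
  moreover have "smult (Mser u) (Mser (Eps # w)) = (series_of (qshuffle u (Eps # w)) :: 'k ser)"
    unfolding Mser_eq_series_of smult_series_of
    by (rule series_of_cong, rule coeff_mult_delta[OF assms])
  ultimately show ?thesis by simp
qed

lemma Mser_eps_concat_eq:
  fixes F :: "ntil list \<Rightarrow> 'k::comm_ring_1" and u w :: "ntil list"
  assumes "is_comp u" "Eps \<notin> set u"
  defines "F \<equiv> qshuffle u (Eps # w)" and "a \<equiv> u @ Eps # w"
  shows "Mser a = sadd (series_of F) (sscale (-1) (\<lambda>h. \<Sum>g\<in>{g. F g \<noteq> 0} - {a}. F g * Mser g h))"
proof -
  have "F a = 1" using qshuffle_eps_concat[OF assms(1,2)] by (simp add: F_def a_def)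
  moreover have fin: "finite {g. F g \<noteq> 0}" unfolding F_def by (rule finite_supp_qshuffle)
  ultimately have "series_of F = (\<lambda>h. Mser a h + (\<Sum>g\<in>{g. F g \<noteq> 0} - {a}. F g * Mser g h))"
    unfolding series_of_eq_sum_supp[OF fin] by (simp add: sum.remove[of _ a])
  then show ?thesis by (simp add: sadd_def sscale_def fun_eq_iff)
qed

lemma Mser_in_QSym_mod_eps: "is_comp a \<Longrightarrow> Mser a \<in> (QSym_mod_eps :: 'k::comm_ring_1 ser set)"
proof (induction "eps_rank a" arbitrary: a rule: less_induct)
  case less
  show ?case
  proof (cases "Eps \<in> set a")
    case False
    then show ?thesis using Mser_in_QSym less.prems QSym_subset_QSym_mod_eps by blast
  next
    case True
    then obtain u w where a: "a = u @ Eps # w" and u: "Eps \<notin> set u"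
      by (blast dest: split_list_first)
    have comps: "is_comp u" "is_comp (Eps # w)" using less.prems a by (auto simp: is_comp_def)
    let ?F = "qshuffle u (Eps # w) :: ntil list \<Rightarrow> 'k"
    have lower: "(\<lambda>h. \<Sum>g\<in>{g. ?F g \<noteq> 0} - {a}. ?F g * Mser g h) \<in> (QSym_mod_eps :: 'k ser set)"
    proof (rule sum_in_QSym_mod_eps)
      show "finite ({g. ?F g \<noteq> 0} - {a})" using finite_supp_qshuffle by blast
    next
      fix g assume g: "g \<in> {g. ?F g \<noteq> 0} - {a}"
      then have supp: "length g \<le> length a" "ell_eps g \<le> ell_eps a" "is_comp g"
        using qshuffle_supp[of u "Eps # w" g] comps a ell_eps_eq_0[OF u]
        by (auto simp: ell_eps_append ell_eps_Cons)
      have "ell_eps g \<le> ell_eps w \<or> eps_free_prefix g < length u"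
        using qshuffle_eps_concat_other[OF comps(1) u] g a by blast
      then have "eps_rank g < eps_rank a"
        using supp a u by (intro eps_rank_less)
          (auto simp: ell_eps_append ell_eps_Cons ell_eps_eq_0 eps_free_prefix_append_Eps)
      then show "Mser g \<in> (QSym_mod_eps :: 'k ser set)" using less.hyps supp(3) by blast
    qed
    show ?thesis
      unfolding a Mser_eps_concat_eq[OF comps(1) u, where 'k = 'k]
      using lower[unfolded a] series_of_qshuffle_eps_in_eps_ideal[OF comps, where 'k = 'k]
        eps_ideal_subset_QSym_mod_eps
      by (blast intro: sadd_in_QSym_mod_eps sscale_in_QSym_mod_eps)
  qed
qed

lemma WCQSym_subset_QSym_mod_eps: "WCQSym \<subseteq> QSym_mod_eps"
proof
  fix x :: "'k::comm_ring_1 ser" assume "x \<in> WCQSym"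
  then obtain S e where "finite S" "\<forall>a\<in>S. is_comp a" "x = (\<lambda>h. \<Sum>a\<in>S. e a * Mser a h)"
    by (auto simp: WCQSym_def)
  then show "x \<in> QSym_mod_eps" using Mser_in_QSym_mod_eps sum_in_QSym_mod_eps by metis
qed

section \<open>The kernel of the map\<close>

lemma is_comp_bar: "is_comp a \<Longrightarrow> is_comp (bar a)"
  by (auto simp: is_comp_def bar_def)

lemma phi_coeff_eq_scaled_delta:
  "phi_coeff a = (\<lambda>x. (if a = [] \<or> hd a \<noteq> Eps then (-1) ^ ell_eps a else 0) * delta (bar a) x)"
  by (auto simp: phi_coeff_def signed_bar_def delta_def fun_eq_iff)

lemma coeff_mult_phi_coeff:
  assumes "is_comp a" "is_comp b" "is_comp w"
  shows "coeff_mult (phi_coeff a) (phi_coeff b) w =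
    (if (a = [] \<or> hd a \<noteq> Eps) \<and> (b = [] \<or> hd b \<noteq> Eps)
     then (-1) ^ (ell_eps a + ell_eps b) * qshuffle (bar a) (bar b) w else (0::'k::comm_ring_1))"
  unfolding phi_coeff_eq_scaled_delta coeff_mult_scale
    coeff_mult_delta[OF is_comp_bar[OF assms(1)] is_comp_bar[OF assms(2)] assms(3)]
  by (simp add: power_add)

lemma coeff_transform_phi_coeff_coeff_prod:
  fixes c d :: "ntil list \<Rightarrow> 'k::comm_ring_1"
  assumes c: "comp_coeff c" and d: "comp_coeff d" and w: "is_comp w"
  shows "coeff_transform phi_coeff (coeff_prod c d) w =
    coeff_mult (coeff_transform phi_coeff c) (coeff_transform phi_coeff d) w"
proof -
  let ?Sc = "{g. c g \<noteq> 0}" and ?Sd = "{g. d g \<noteq> 0}"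
  let ?U = "\<Union>a\<in>?Sc. \<Union>b\<in>?Sd. {g. qshuffle a b g \<noteq> (0::'k)}"
  have fin: "finite ?Sc" "finite ?Sd" "finite ?U"
    using c d finite_supp_qshuffle by (auto simp: comp_coeff_def)
  have "coeff_transform phi_coeff (coeff_prod c d) w = (\<Sum>g\<in>?U. coeff_prod c d g * phi_coeff g w)"
    by (rule coeff_transform_eq_sum[OF fin(3) supp_coeff_prod])
  also have "\<dots> = (\<Sum>a\<in>?Sc. \<Sum>b\<in>?Sd. c a * d b * (\<Sum>g\<in>?U. qshuffle a b g * phi_coeff g w))"
    unfolding coeff_prod_def sum_distrib_right sum_distrib_left
    by (subst sum.swap, rule sum.cong[OF refl], subst sum.swap) (simp add: mult.assoc)
  also have "\<dots> = (\<Sum>a\<in>?Sc. \<Sum>b\<in>?Sd. c a * d b * coeff_transform phi_coeff (qshuffle a b) w)"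
    by (intro sum.cong refl arg_cong2[where f = "(*)"] coeff_transform_eq_sum[symmetric] fin) blast
  also have "\<dots> = (\<Sum>a\<in>?Sc. \<Sum>b\<in>?Sd. c a * d b * coeff_mult (phi_coeff a) (phi_coeff b) w)"
    using c d w by (intro sum.cong refl)
      (simp add: comp_coeff_def coeff_transform_phi_coeff_qshuffle coeff_mult_phi_coeff)
  also have "\<dots> = coeff_mult (\<lambda>x. \<Sum>a\<in>?Sc. c a * phi_coeff a x) (\<lambda>x. \<Sum>b\<in>?Sd. d b * phi_coeff b x) w"
    by (rule coeff_mult_sum[OF fin(1,2), symmetric])
  also have "\<dots> = coeff_mult (coeff_transform phi_coeff c) (coeff_transform phi_coeff d) w"
    by (simp add: coeff_transform_def[abs_def])
  finally show ?thesis .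
qed

lemma smult_szero_right: "smult a szero = szero"
  by (simp add: smult_def szero_def fun_eq_iff)

lemma phi_coeff_eps_free:
  assumes "Eps \<notin> set g"
  shows "phi_coeff g = delta g"
proof -
  have "bar g = g" using assms by (auto simp: bar_def filter_id_conv)
  then show ?thesis using assms
    by (cases g) (auto simp: phi_coeff_def signed_bar_def delta_def ell_eps_eq_0 fun_eq_iff)
qed

locale wcqsym_phi =
  fixes \<phi> :: "'k::comm_ring_1 ser \<Rightarrow> 'k ser"
  assumes lin_add: "\<forall>x\<in>WCQSym. \<forall>y\<in>WCQSym. \<phi> (sadd x y) = sadd (\<phi> x) (\<phi> y)"
    and lin_scale: "\<forall>c. \<forall>x\<in>WCQSym. \<phi> (sscale c x) = sscale c (\<phi> x)"
    and phi_N: "\<forall>\<alpha>\<in>C_N. \<phi> (Mser \<alpha>) = sscale ((-1) ^ ell_eps \<alpha>) (Mser (bar \<alpha>))"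
    and phi_eps: "\<forall>\<alpha>\<in>C_eps. \<phi> (Mser \<alpha>) = szero"
begin

lemma phi_Mser: "is_comp a \<Longrightarrow> \<phi> (Mser a) = series_of (phi_coeff a)"
  using phi_N phi_eps
  by (cases "a = [] \<or> hd a \<noteq> Eps")
    (auto simp: C_N_def C_eps_def Mser_eq_series_of sscale_series_of szero_eq_series_of
      phi_coeff_eq_scaled_delta)

lemma phi_szero: "\<phi> szero = szero"
proof -
  have "\<phi> szero = \<phi> (sscale 0 szero)" by (simp add: sscale_def szero_def)
  also have "\<dots> = sscale 0 (\<phi> szero)" using lin_scale szero_in_WCQSym by blast
  finally show ?thesis by (simp add: sscale_def szero_def)
qed

lemma phi_sum:
  "finite S \<Longrightarrow> (\<And>a. a \<in> S \<Longrightarrow> is_comp a) \<Longrightarrow>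
     \<phi> (\<lambda>h. \<Sum>a\<in>S. e a * Mser a h) = (\<lambda>h. \<Sum>a\<in>S. e a * \<phi> (Mser a) h)"
proof (induction S rule: finite_induct)
  case empty
  then show ?case using phi_szero by (simp add: szero_def)
next
  case (insert x F)
  have x: "Mser x \<in> WCQSym" using insert Mser_in_WCQSym by blast
  have F: "(\<lambda>h. \<Sum>a\<in>F. e a * Mser a h) \<in> WCQSym" unfolding WCQSym_def using insert by blast
  have "(\<lambda>h. \<Sum>a\<in>insert x F. e a * Mser a h) =
      sadd (sscale (e x) (Mser x)) (\<lambda>h. \<Sum>a\<in>F. e a * Mser a h)"
    using insert by (simp add: sadd_def sscale_def)
  moreover have "\<phi> (sadd (sscale (e x) (Mser x)) (\<lambda>h. \<Sum>a\<in>F. e a * Mser a h)) =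
      sadd (\<phi> (sscale (e x) (Mser x))) (\<phi> (\<lambda>h. \<Sum>a\<in>F. e a * Mser a h))"
    using lin_add x F sscale_in_WCQSym by blast
  moreover have "\<phi> (sscale (e x) (Mser x)) = sscale (e x) (\<phi> (Mser x))"
    using lin_scale x by blast
  ultimately have "\<phi> (\<lambda>h. \<Sum>a\<in>insert x F. e a * Mser a h) =
      sadd (sscale (e x) (\<phi> (Mser x))) (\<phi> (\<lambda>h. \<Sum>a\<in>F. e a * Mser a h))"
    by simp
  then show ?case using insert by (simp add: sadd_def sscale_def)
qed

lemma phi_series_of:
  assumes "comp_coeff c"
  shows "\<phi> (series_of c) = series_of (coeff_transform phi_coeff c)"
proof -
  have fin: "finite {g. c g \<noteq> 0}" and comps: "\<And>g. c g \<noteq> 0 \<Longrightarrow> is_comp g"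
    using assms by (auto simp: comp_coeff_def)
  have "\<phi> (series_of c) = (\<lambda>h. \<Sum>a\<in>{g. c g \<noteq> 0}. c a * \<phi> (Mser a) h)"
    unfolding series_of_eq_sum_supp[OF fin] by (rule phi_sum[OF fin]) (simp add: comps)
  also have "\<dots> = (\<lambda>h. \<Sum>a\<in>{g. c g \<noteq> 0}. c a * series_of (phi_coeff a) h)"
    using comps by (simp add: phi_Mser)
  also have "\<dots> = series_of (coeff_transform phi_coeff c)"
    by (auto simp: series_of_def coeff_transform_def fun_eq_iff)
  finally show ?thesis .
qed

lemma phi_smult:
  assumes "x \<in> WCQSym" "y \<in> WCQSym"
  shows "\<phi> (smult x y) = smult (\<phi> x) (\<phi> y)"
proof -
  obtain c d where c: "comp_coeff c" "x = series_of c" and d: "comp_coeff d" "y = series_of d"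
    using assms unfolding WCQSym_iff by blast
  have "\<phi> (smult x y) = series_of (coeff_transform phi_coeff (coeff_prod c d))"
    using c d by (simp add: smult_series_of_comp_coeff phi_series_of comp_coeff_coeff_prod)
  also have "\<dots> = series_of (coeff_mult (coeff_transform phi_coeff c) (coeff_transform phi_coeff d))"
    by (rule series_of_cong) (rule coeff_transform_phi_coeff_coeff_prod[OF c(1) d(1)])
  also have "\<dots> = smult (\<phi> x) (\<phi> y)"
    using c d by (simp add: phi_series_of smult_series_of)
  finally show ?thesis .
qed

lemma phi_QSym:
  assumes "q \<in> QSym"
  shows "\<phi> q = q"
proof -
  obtain c where c: "comp_coeff c" "\<forall>g. c g \<noteq> 0 \<longrightarrow> Eps \<notin> set g" "q = series_of c"
    using assms unfolding QSym_def by blast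
  have "coeff_transform phi_coeff c = coeff_transform delta c"
    using c(2) by (auto simp: coeff_transform_def phi_coeff_eps_free fun_eq_iff intro!: sum.cong)
  also have "\<dots> = c"
    unfolding coeff_transform_def[abs_def]
    by (rule coeff_eq_sum_delta[symmetric]) (use c(1) in \<open>auto simp: comp_coeff_def\<close>)
  finally show ?thesis using c(1,3) by (simp add: phi_series_of)
qed

lemma eps_ideal_subset_ker: "eps_ideal \<subseteq> {x \<in> WCQSym. \<phi> x = szero}"
proof (rule gen_ideal_least)
  show "{Mser \<alpha> | \<alpha>. \<alpha> \<in> C_eps} \<subseteq> {x \<in> WCQSym. \<phi> x = szero}"
    using phi_eps Mser_in_WCQSym by (auto simp: C_eps_def)
  show "szero \<in> {x \<in> WCQSym. \<phi> x = szero}"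
    using phi_szero szero_in_WCQSym by blast
  show "sadd x y \<in> {x \<in> WCQSym. \<phi> x = szero}"
    if "x \<in> {x \<in> WCQSym. \<phi> x = szero}" "y \<in> {x \<in> WCQSym. \<phi> x = szero}" for x y
  proof -
    have "\<phi> (sadd x y) = sadd (\<phi> x) (\<phi> y)" and "sadd x y \<in> WCQSym"
      using lin_add sadd_in_WCQSym that by blast+
    then show ?thesis using that by (simp add: sadd_def szero_def)
  qed
  show "smult a x \<in> {x \<in> WCQSym. \<phi> x = szero}"
    if "a \<in> WCQSym" "x \<in> {x \<in> WCQSym. \<phi> x = szero}" for a x
  proof -
    have "\<phi> (smult a x) = smult (\<phi> a) (\<phi> x)" and "smult a x \<in> WCQSym"
      using phi_smult smult_in_WCQSym that by blast+
    then show ?thesis using that by (simp add: smult_szero_right)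
  qed
qed blast

lemma ker_subset_eps_ideal: "{x \<in> WCQSym. \<phi> x = szero} \<subseteq> eps_ideal"
proof safe
  fix x assume x: "x \<in> WCQSym" "\<phi> x = szero"
  then obtain q where q: "q \<in> QSym" "(\<lambda>h. x h - q h) \<in> eps_ideal"
    using WCQSym_subset_QSym_mod_eps unfolding QSym_mod_eps_def by blast
  have qW: "q \<in> WCQSym" using QSym_subset_WCQSym q(1) by blast
  have "\<phi> (sadd x (sscale (-1) q)) = sadd (\<phi> x) (\<phi> (sscale (-1) q))"
    using lin_add x(1) sscale_in_WCQSym[OF qW] by blast
  also have "\<dots> = sadd (\<phi> x) (sscale (-1) (\<phi> q))"
    using lin_scale qW by simp
  finally have "\<phi> (sadd x (sscale (-1) q)) = sadd (\<phi> x) (sscale (-1) (\<phi> q))" .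
  moreover have "sadd x (sscale (-1) q) = (\<lambda>h. x h - q h)"
    by (simp add: sadd_def sscale_def fun_eq_iff)
  moreover have "\<phi> (\<lambda>h. x h - q h) = szero"
    using eps_ideal_subset_ker q(2) by blast
  ultimately have "q = szero"
    using x(2) phi_QSym[OF q(1)] by (simp add: sadd_def sscale_def szero_def fun_eq_iff)
  then show "x \<in> eps_ideal" using q(2) by (simp add: szero_def)
qed

end


theorem corollary3p12:
  fixes \<phi> :: "'k::comm_ring_1 ser \<Rightarrow> 'k ser"
  assumes nontriv: "(1::'k) \<noteq> 0"
    and Q_sub: "\<forall>n::nat. n > 0 \<longrightarrow> (\<exists>y::'k. of_nat n * y = 1)"
    and lin_add: "\<forall>x\<in>WCQSym. \<forall>y\<in>WCQSym. \<phi> (sadd x y) = sadd (\<phi> x) (\<phi> y)"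
    and lin_scale: "\<forall>c. \<forall>x\<in>WCQSym. \<phi> (sscale c x) = sscale c (\<phi> x)"
    and phi_N: "\<forall>\<alpha>\<in>C_N. \<phi> (Mser \<alpha>) = sscale ((-1) ^ ell_eps \<alpha>) (Mser (bar \<alpha>))"
    and phi_eps: "\<forall>\<alpha>\<in>C_eps. \<phi> (Mser \<alpha>) = szero"
  shows "{x \<in> WCQSym. \<phi> x = szero} = gen_ideal WCQSym {Mser \<alpha> | \<alpha>. \<alpha> \<in> C_eps}"
proof -
  interpret wcqsym_phi \<phi>
    using lin_add lin_scale phi_N phi_eps by unfold_locales
  show ?thesis using eps_ideal_subset_ker ker_subset_eps_ideal by blast
qed

end
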